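(* Let $K$ be a field, $R=K[x_1,\ldots,x_n]$, $\prec$ an admissible monomial ordering on $R$, and $\mathcal{L}$ an involutive division of the class described in the context (determined by a permutation $\rho$ of $\{1,\ldots,n\}$ and a total monomial ordering $\sqsupset$ which is either admissible or the inverse of an admissible ordering). Let $G=\{g_1,\ldots,g_k\}$ be a minimal Gröbner basis of an ideal $I\subset R$ with respect to $\prec$, and for $i=1,\ldots,n$ let $h_i=\max_{g\in G}\deg_i(\mathrm{LM}(g))$. Then the set of products $$\bar G=\{\, m g \mid g\in G,\ m \text{ a monomial such that } \deg_i(m)\le h_i-\deg_i(\mathrm{LM}(g)) \text{ for all } i=1,\ldots,n\,\}$$ is an $\mathcal{L}$-involutive basis of $I$ with respect to $\prec$.
   Context: For a monomial $u=x_1^{\alpha_1}\cdots x_n^{\alpha_n}$, $\deg_i(u)=\alpha_i$; $\mathrm{LM}(f)$ denotes the leading monomial of $f$ with respect to $\prec$. The involutive division $\mathcal{L}$ is defined as follows. Fix a permutation $\rho$ of $\{1,\ldots,n\}$ and a total ordering $\sqsupset$ on monomials that is either an admissible monomial ordering or the inverse of one. For a finite set $U$ of monomials and $u,v\in U$, set $NM(u,\{u,v\})=\emptyset$ if $u\sqsupset v$ or ($u\sqsubset v$ and $v$ divides $u$); otherwise $NM(u,\{u,v\})=\{x_{\rho(i)}\}$ where $i=\min\{j \mid \deg_{\rho(j)}(u)<\deg_{\rho(j)}(v)\}$. The set of nonmultiplicative variables of $u\in U$ is $NM_{\mathcal{L}}(u,U)=\bigcup_{v\in U\setminus\{u\}}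 NM(u,\{u,v\})$, and the remaining variables form the set $M_{\mathcal{L}}(u,U)$ of multiplicative variables. Let $\mathcal{L}(u,U)$ be the set of all monomials in the variables of $M_{\mathcal{L}}(u,U)$. For $u\in U$ and a monomial $w$, $u$ is an $\mathcal{L}$-divisor of $w$ (written $u\mid_{\mathcal{L}} w$) if $w\in u\,\mathcal{L}(u,U)$. (For example, $\sqsupset=\succ_{\mathrm{lex}}$ with $\rho$ the identity gives Janet division.) A finite set $G'\subset I$ is an $\mathcal{L}$-involutive basis of $I$ with respect to $\prec$ if for every nonzero $f\in I$ there exists $g\in G'$ with $\mathrm{LM}(g)\mid_{\mathcal{L}}\mathrm{LM}(f)$, where the involutive divisibility is taken with respect to $U=\mathrm{LM}(G')=\{\mathrm{LM}(g)\mid g\in G'\}$. *)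

theory Defs
  imports Main "HOL-Library.Poly_Mapping"
begin

text \<open>Monomials in x_0,...,x_(n-1) are exponent vectors (nat =>0 nat) with Poly_Mapping.keys in {..<n};
polynomials over a field are finitely supported maps from monomials to coefficients
((nat =>0 nat) =>0 'a), with the convolution product of Poly_Mapping.
Variable x_(i+1) of the paper is the index i here.\<close>

type_synonym mon = "nat \<Rightarrow>\<^sub>0 nat"
type_synonym 'a mpoly = "mon \<Rightarrow>\<^sub>0 'a"

definition monomials :: "nat \<Rightarrow> mon set" where
  "monomials n = {t. Poly_Mapping.keys t \<subseteq> {..<n}}"

definition polys :: "nat \<Rightarrow> ('a::zero) mpoly set" where
  "polys n = {p. \<forall>t\<in>Poly_Mapping.keys p. t \<in> monomials n}"

definition mdvd :: "mon \<Rightarrow> mon \<Rightarrow> bool" where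
  "mdvd v u \<longleftrightarrow> (\<forall>i. Poly_Mapping.lookup v i \<le> Poly_Mapping.lookup u i)"

definition deg :: "nat \<Rightarrow> mon \<Rightarrow> nat" where
  "deg i u = Poly_Mapping.lookup u i"

definition admissible :: "nat \<Rightarrow> (mon \<Rightarrow> mon \<Rightarrow> bool) \<Rightarrow> bool" where
  "admissible n ord \<longleftrightarrow>
     (\<forall>s\<in>monomials n. \<not> ord s s) \<and>
     (\<forall>s\<in>monomials n. \<forall>t\<in>monomials n. \<forall>u\<in>monomials n. ord s t \<longrightarrow> ord t u \<longrightarrow> ord s u) \<and>
     (\<forall>s\<in>monomials n. \<forall>t\<in>monomials n. s = t \<or> ord s t \<or> ord t s) \<and>
     (\<forall>t\<in>monomials n. t \<noteq> 0 \<longrightarrow> ord 0 t) \<and>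
     (\<forall>s\<in>monomials n. \<forall>t\<in>monomials n. \<forall>w\<in>monomials n. ord s t \<longrightarrow> ord (s + w) (t + w))"

definition LM :: "(mon \<Rightarrow> mon \<Rightarrow> bool) \<Rightarrow> ('a::zero) mpoly \<Rightarrow> mon" where
  "LM ord f = (THE t. t \<in> Poly_Mapping.keys f \<and> (\<forall>s\<in>Poly_Mapping.keys f. s \<noteq> t \<longrightarrow> ord s t))"

definition LC :: "(mon \<Rightarrow> mon \<Rightarrow> bool) \<Rightarrow> ('a::zero) mpoly \<Rightarrow> 'a" where
  "LC ord f = Poly_Mapping.lookup f (LM ord f)"

definition is_ideal :: "nat \<Rightarrow> ('a::comm_ring_1) mpoly set \<Rightarrow> bool" where
  "is_ideal n I \<longleftrightarrow> I \<subseteq> polys n \<and> 0 \<in> I \<and>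
     (\<forall>f\<in>I. \<forall>g\<in>I. f + g \<in> I) \<and> (\<forall>p\<in>polys n. \<forall>f\<in>I. p * f \<in> I)"

definition groebner_basis :: "nat \<Rightarrow> (mon \<Rightarrow> mon \<Rightarrow> bool) \<Rightarrow> ('a::comm_ring_1) mpoly set \<Rightarrow> 'a mpoly set \<Rightarrow> bool" where
  "groebner_basis n ord G I \<longleftrightarrow> finite G \<and> G \<subseteq> I \<and> 0 \<notin> G \<and>
     (\<forall>f\<in>I. f \<noteq> 0 \<longrightarrow> (\<exists>g\<in>G. mdvd (LM ord g) (LM ord f)))"

definition minimal_groebner_basis :: "nat \<Rightarrow> (mon \<Rightarrow> mon \<Rightarrow> bool) \<Rightarrow> ('a::comm_ring_1) mpoly set \<Rightarrow> 'a mpoly set \<Rightarrow> bool" where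
  "minimal_groebner_basis n ord G I \<longleftrightarrow> groebner_basis n ord G I \<and>
     (\<forall>g\<in>G. LC ord g = 1) \<and>
     (\<forall>g\<in>G. \<forall>g'\<in>G. g \<noteq> g' \<longrightarrow> \<not> mdvd (LM ord g') (LM ord g))"

text \<open>The division L. sq u v means u \<sqsupset> v; rho is a permutation of {..<n}
(0-indexed). NM2 u v is NM(u,{u,v}).\<close>
definition NM2 :: "nat \<Rightarrow> (mon \<Rightarrow> mon \<Rightarrow> bool) \<Rightarrow> (nat \<Rightarrow> nat) \<Rightarrow> mon \<Rightarrow> mon \<Rightarrow> nat set" where
  "NM2 n sq \<rho> u v =
     (if sq u v \<or> (sq v u \<and> mdvd v u) then {}
      else {\<rho> (LEAST j. j < n \<and> deg (\<rho> j) u < deg (\<rho> j) v)})"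

definition NM_L :: "nat \<Rightarrow> (mon \<Rightarrow> mon \<Rightarrow> bool) \<Rightarrow> (nat \<Rightarrow> nat) \<Rightarrow> mon \<Rightarrow> mon set \<Rightarrow> nat set" where
  "NM_L n sq \<rho> u U = (\<Union>v\<in>U - {u}. NM2 n sq \<rho> u v)"

definition M_L :: "nat \<Rightarrow> (mon \<Rightarrow> mon \<Rightarrow> bool) \<Rightarrow> (nat \<Rightarrow> nat) \<Rightarrow> mon \<Rightarrow> mon set \<Rightarrow> nat set" where
  "M_L n sq \<rho> u U = {..<n} - NM_L n sq \<rho> u U"

text \<open>u is an L-divisor of w (relative to U): w \<in> u * L(u,U).\<close>
definition L_divides :: "nat \<Rightarrow> (mon \<Rightarrow> mon \<Rightarrow> bool) \<Rightarrow> (nat \<Rightarrow> nat) \<Rightarrow> mon set \<Rightarrow> mon \<Rightarrow> mon \<Rightarrow> bool" where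
  "L_divides n sq \<rho> U u w \<longleftrightarrow> (\<exists>m. Poly_Mapping.keys m \<subseteq> M_L n sq \<rho> u U \<and> w = u + m)"

definition L_involutive_basis :: "nat \<Rightarrow> (mon \<Rightarrow> mon \<Rightarrow> bool) \<Rightarrow> (nat \<Rightarrow> nat) \<Rightarrow>
    (mon \<Rightarrow> mon \<Rightarrow> bool) \<Rightarrow> ('a::comm_ring_1) mpoly set \<Rightarrow> 'a mpoly set \<Rightarrow> bool" where
  "L_involutive_basis n sq \<rho> ord G' I \<longleftrightarrow> finite G' \<and> G' \<subseteq> I \<and>
     (\<forall>f\<in>I. f \<noteq> 0 \<longrightarrow>
        (\<exists>g\<in>G'. L_divides n sq \<rho> (LM ord ` G') (LM ord g) (LM ord f)))"

end

theory Submission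
  imports Defs
begin

text \<open>Let h bound the leading monomials of G componentwise. Every leading monomial w of a nonzero
element of I is a multiple of some LM(g), and its truncation u = min(w, h) is still such a
multiple, hence u is the leading monomial of an element of the completed basis. The quotient
w / u only involves variables x_i with w_i > h_i; in such a variable u attains the largest degree
occurring among all leading monomials of the completed basis, and the class of divisions at hand
never declares such a variable nonmultiplicative for u: either some other variable is the first
(in the order rho) where u falls below v, or v properly divides u, in which case u and v are
comparable for sq and NM(u, {u, v}) is empty.\<close>

lemma monomials_iff: "t \<in> monomials n \<longleftrightarrow> (\<forall>k\<ge>n. Poly_Mapping.lookup t k = 0)"
  unfolding monomials_def by (auto simp: in_keys_iff) (metis not_le less_irrefl)

lemma monomials_add: "s \<in> monomials n \<Longrightarrow> t \<in> monomials n \<Longrightarrow> s + t \<in> monomials n"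
  by (simp add: monomials_iff lookup_add)

lemma monomials_diff: "s \<in> monomials n \<Longrightarrow> s - t \<in> monomials n"
  by (simp add: monomials_iff lookup_minus)

lemma mdvd_imp_eq_add_diff: "mdvd t s \<Longrightarrow> s = t + (s - t)"
  unfolding mdvd_def by (intro poly_mapping_eqI) (simp add: lookup_add lookup_minus)

lemma finite_bounded_monomials: "finite {m \<in> monomials n. \<forall>i<n. deg i m \<le> b i}"
proof -
  define B where "B = Max (b ` {..<n})"
  have "deg i m \<le> B" if "i < n" "deg i m \<le> b i" for i m
    using that by (auto simp: B_def intro: order_trans[OF _ Max_ge])
  then have "Poly_Mapping.lookup ` {m \<in> monomials n. \<forall>i<n. deg i m \<le> b i}
          \<subseteq> {f. \<forall>x. (x \<in> {..<n} \<longrightarrow> f x \<in> {..B}) \<and> (x \<notin> {..<n} \<longrightarrow> f x = 0)}"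
    by (auto simp: monomials_iff deg_def)
  then have "finite (Poly_Mapping.lookup ` {m \<in> monomials n. \<forall>i<n. deg i m \<le> b i})"
    using finite_subset finite_set_of_finite_funs[of "{..<n}" "{..B}" 0] by blast
  then show ?thesis
    by (rule finite_imageD) (simp add: inj_on_def)
qed

lemma admissible_trans:
  "admissible n ord \<Longrightarrow> s \<in> monomials n \<Longrightarrow> t \<in> monomials n \<Longrightarrow> u \<in> monomials n
    \<Longrightarrow> ord s t \<Longrightarrow> ord t u \<Longrightarrow> ord s u"
  unfolding admissible_def by blast

lemma admissible_total:
  "admissible n ord \<Longrightarrow> s \<in> monomials n \<Longrightarrow> t \<in> monomials n \<Longrightarrow> s \<noteq> t \<Longrightarrow> ord s t \<or> ord t s"
  unfolding admissible_def by blast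

lemma admissible_asym:
  "admissible n ord \<Longrightarrow> s \<in> monomials n \<Longrightarrow> t \<in> monomials n \<Longrightarrow> ord s t \<Longrightarrow> \<not> ord t s"
  unfolding admissible_def by blast

lemma admissible_zero_less: "admissible n ord \<Longrightarrow> t \<in> monomials n \<Longrightarrow> t \<noteq> 0 \<Longrightarrow> ord 0 t"
  unfolding admissible_def by blast

lemma admissible_add_right:
  "admissible n ord \<Longrightarrow> s \<in> monomials n \<Longrightarrow> t \<in> monomials n \<Longrightarrow> w \<in> monomials n
    \<Longrightarrow> ord s t \<Longrightarrow> ord (s + w) (t + w)"
  unfolding admissible_def by blast

lemma admissible_ex_greatest:
  assumes adm: "admissible n ord" and "finite A" "A \<noteq> {}" "A \<subseteq> monomials n"
  shows "\<exists>t\<in>A. \<forall>s\<in>A. s \<noteq> t \<longrightarrow> ord s t"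
  using assms(2-4)
proof (induction A rule: finite_ne_induct)
  case (singleton x)
  then show ?case by auto
next
  case (insert x F)
  then obtain t where t: "t \<in> F" "\<forall>s\<in>F. s \<noteq> t \<longrightarrow> ord s t" by auto
  have x: "x \<in> monomials n" and F: "F \<subseteq> monomials n" using insert.prems by auto
  have "x \<noteq> t" using insert.hyps t by auto
  then consider "ord x t" | "ord t x"
    using admissible_total[OF adm x] t F by blast
  then show ?case
  proof cases
    case 1
    then show ?thesis using t by auto
  next
    case 2
    have "ord s x" if "s \<in> F" for s
    proof (cases "s = t")
      case False
      then have "ord s t" using t that by blast
      moreover have "s \<in> monomials n" "t \<in> monomials n" using F t(1) that by auto
      ultimately show ?thesis using admissible_trans[OF adm _ _ x _ 2] by blast
    qed (use 2 in simp)
    then show ?thesis by auto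
  qed
qed

lemma admissible_proper_divisor_less:
  assumes adm: "admissible n ord" and s: "s \<in> monomials n" and "mdvd t s" "t \<noteq> s"
  shows "ord t s"
proof -
  have t: "t \<in> monomials n"
    using s \<open>mdvd t s\<close> by (auto simp: monomials_iff mdvd_def) (metis le_zero_eq)
  have s_eq: "s = t + (s - t)" using \<open>mdvd t s\<close> by (rule mdvd_imp_eq_add_diff)
  have d: "s - t \<in> monomials n" using s by (rule monomials_diff)
  have "s - t \<noteq> 0" using s_eq \<open>t \<noteq> s\<close> by auto
  then have "ord 0 (s - t)" using admissible_zero_less[OF adm d] by blast
  moreover have "(0::mon) \<in> monomials n" by (simp add: monomials_def)
  ultimately have "ord (0 + t) ((s - t) + t)" using admissible_add_right[OF adm _ d t] by blast
  then show ?thesis using s_eq by (simp add: add.commute)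
qed

lemma NM2_proper_divisor:
  assumes "admissible n sq \<or> admissible n (\<lambda>u v. sq v u)"
    and "u \<in> monomials n" "mdvd v u" "v \<noteq> u"
  shows "NM2 n sq \<rho> u v = {}"
  using assms(1)
proof
  assume "admissible n sq"
  then have "sq v u" using assms(2-4) by (rule admissible_proper_divisor_less)
  then show ?thesis using assms(3) by (simp add: NM2_def)
next
  assume "admissible n (\<lambda>u v. sq v u)"
  then have "sq u v" using admissible_proper_divisor_less[OF _ assms(2-4)] by blast
  then show ?thesis by (simp add: NM2_def)
qed

lemma ex_smaller_var_if_not_mdvd:
  assumes "bij_betw \<rho> {..<n} {..<n}" "v \<in> monomials n" "\<not> mdvd v u"
  shows "\<exists>j<n. deg (\<rho> j) u < deg (\<rho> j) v"
proof -
  obtain k where k: "Poly_Mapping.lookup u k < Poly_Mapping.lookup v k"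
    using assms(3) by (auto simp: mdvd_def not_le)
  then have "k < n" using assms(2) by (auto simp: monomials_iff) (metis leI less_nat_zero_code)
  then obtain j where "j < n" "\<rho> j = k"
    using assms(1) unfolding bij_betw_def by (metis imageE lessThan_iff)
  then show ?thesis using k by (auto simp: deg_def)
qed

lemma not_in_NM2_if_deg_le:
  assumes "admissible n sq \<or> admissible n (\<lambda>u v. sq v u)" "bij_betw \<rho> {..<n} {..<n}"
    and "u \<in> monomials n" "v \<in> monomials n" "v \<noteq> u" "deg i v \<le> deg i u"
  shows "i \<notin> NM2 n sq \<rho> u v"
proof (cases "mdvd v u")
  case True
  \<comment> \<open>Here the LEAST in NM2 ranges over no j and its value is unspecified, so sq has to decide.\<close>
  then show ?thesis using NM2_proper_divisor[OF assms(1,3) _ assms(5)] by simp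
next
  case False
  then have "\<exists>j. j < n \<and> deg (\<rho> j) u < deg (\<rho> j) v"
    using ex_smaller_var_if_not_mdvd[OF assms(2,4)] by blast
  then have "deg (\<rho> (LEAST j. j < n \<and> deg (\<rho> j) u < deg (\<rho> j) v)) u
           < deg (\<rho> (LEAST j. j < n \<and> deg (\<rho> j) u < deg (\<rho> j) v)) v"
    by (rule LeastI2_ex) blast
  then show ?thesis using assms(6) by (auto simp: NM2_def)
qed

lemma multiplicative_if_deg_maximal:
  assumes "admissible n sq \<or> admissible n (\<lambda>u v. sq v u)" "bij_betw \<rho> {..<n} {..<n}"
    and "U \<subseteq> monomials n" "u \<in> U" "i < n" "\<forall>v\<in>U. deg i v \<le> deg i u"
  shows "i \<in> M_L n sq \<rho> u U"
  using assms not_in_NM2_if_deg_le[OF assms(1,2)] unfolding M_L_def NM_L_def by blast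

definition truncate :: "(nat \<Rightarrow> nat) \<Rightarrow> mon \<Rightarrow> mon" where
  "truncate h w = Abs_poly_mapping (\<lambda>i. min (Poly_Mapping.lookup w i) (h i))"

lemma lookup_truncate: "Poly_Mapping.lookup (truncate h w) i = min (Poly_Mapping.lookup w i) (h i)"
proof -
  have "{i. min (Poly_Mapping.lookup w i) (h i) \<noteq> 0} \<subseteq> Poly_Mapping.keys w"
    by (auto simp: in_keys_iff)
  then show ?thesis
    unfolding truncate_def by (simp add: finite_subset)
qed

lemma mdvd_truncate: "mdvd t w \<Longrightarrow> \<forall>i. deg i t \<le> h i \<Longrightarrow> mdvd t (truncate h w)"
  by (simp add: mdvd_def deg_def lookup_truncate)

lemma L_divides_truncate:
  assumes "admissible n sq \<or> admissible n (\<lambda>u v. sq v u)" "bij_betw \<rho> {..<n} {..<n}"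
    and "w \<in> monomials n" "U \<subseteq> monomials n" "truncate h w \<in> U" "\<forall>v\<in>U. \<forall>i<n. deg i v \<le> h i"
  shows "L_divides n sq \<rho> U (truncate h w) w"
proof -
  let ?u = "truncate h w"
  have "Poly_Mapping.keys (w - ?u) \<subseteq> M_L n sq \<rho> ?u U"
  proof
    fix i assume "i \<in> Poly_Mapping.keys (w - ?u)"
    then have wi: "h i < Poly_Mapping.lookup w i"
      by (auto simp: in_keys_iff lookup_minus lookup_truncate)
    then have "i < n" using assms(3) by (auto simp: monomials_iff) (metis leI less_nat_zero_code)
    moreover have "deg i ?u = h i" using wi by (simp add: deg_def lookup_truncate)
    ultimately show "i \<in> M_L n sq \<rho> ?u U"
      using multiplicative_if_deg_maximal[OF assms(1,2,4,5)] assms(6) by simp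
  qed
  moreover have "w = ?u + (w - ?u)"
    by (rule mdvd_imp_eq_add_diff) (simp add: mdvd_def lookup_truncate)
  ultimately show ?thesis by (auto simp: L_divides_def)
qed

lemma LM_eqI:
  assumes adm: "admissible n ord" and keys: "Poly_Mapping.keys f \<subseteq> monomials n"
    and t: "t \<in> Poly_Mapping.keys f" "\<forall>s\<in>Poly_Mapping.keys f. s \<noteq> t \<longrightarrow> ord s t"
  shows "LM ord f = t"
  unfolding LM_def
proof (rule the_equality)
  fix t' assume t': "t' \<in> Poly_Mapping.keys f \<and> (\<forall>s\<in>Poly_Mapping.keys f. s \<noteq> t' \<longrightarrow> ord s t')"
  show "t' = t"
  proof (rule ccontr)
    assume "t' \<noteq> t"
    then have "ord t' t" "ord t t'" using t t' by auto
    then show False using admissible_asym[OF adm] keys t t' by blast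
  qed
qed (use t in blast)

lemma LM_greatest_key:
  assumes adm: "admissible n ord" and "f \<in> polys n" "f \<noteq> 0"
  shows "LM ord f \<in> Poly_Mapping.keys f \<and> (\<forall>s\<in>Poly_Mapping.keys f. s \<noteq> LM ord f \<longrightarrow> ord s (LM ord f))"
proof -
  have keys: "Poly_Mapping.keys f \<subseteq> monomials n" using assms(2) unfolding polys_def by auto
  obtain t where t: "t \<in> Poly_Mapping.keys f" "\<forall>s\<in>Poly_Mapping.keys f. s \<noteq> t \<longrightarrow> ord s t"
    using admissible_ex_greatest[OF adm finite_keys _ keys] \<open>f \<noteq> 0\<close> by auto
  with LM_eqI[OF adm keys t] show ?thesis by simp
qed

lemma LM_in_monomials: "admissible n ord \<Longrightarrow> f \<in> polys n \<Longrightarrow> f \<noteq> 0 \<Longrightarrow> LM ord f \<in> monomials n"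
  using LM_greatest_key unfolding polys_def by blast

lemma lookup_monom_mult:
  fixes m t :: mon
  shows "Poly_Mapping.lookup (Poly_Mapping.single m (1::'a::comm_ring_1) * g) (m + t) = Poly_Mapping.lookup g t"
proof -
  have "(m + t = m + q) = (t = q)" for q :: mon by simp
  then show ?thesis by (simp add: lookup_mult lookup_single when_mult)
qed

lemma keys_monom_mult:
  fixes m :: mon
  shows "Poly_Mapping.keys (Poly_Mapping.single m (1::'a::comm_ring_1) * g) = (\<lambda>t. m + t) ` Poly_Mapping.keys g"
proof
  show "Poly_Mapping.keys (Poly_Mapping.single m 1 * g) \<subseteq> (\<lambda>t. m + t) ` Poly_Mapping.keys g"
    using keys_mult[of "Poly_Mapping.single m (1::'a)" g] by auto
  show "(\<lambda>t. m + t) ` Poly_Mapping.keys g \<subseteq> Poly_Mapping.keys (Poly_Mapping.single m (1::'a) * g)"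
    by (auto simp: in_keys_iff lookup_monom_mult)
qed

lemma LM_monom_mult:
  assumes adm: "admissible n ord" and m: "m \<in> monomials n" and g: "g \<in> polys n" "g \<noteq> 0"
  shows "LM ord (Poly_Mapping.single m (1::'a::comm_ring_1) * g) = m + LM ord g"
proof (rule LM_eqI[OF adm])
  have keys_g: "Poly_Mapping.keys g \<subseteq> monomials n" using g(1) unfolding polys_def by auto
  have LM_g: "LM ord g \<in> Poly_Mapping.keys g" "\<forall>s\<in>Poly_Mapping.keys g. s \<noteq> LM ord g \<longrightarrow> ord s (LM ord g)"
    using LM_greatest_key[OF adm g] by auto
  show "Poly_Mapping.keys (Poly_Mapping.single m (1::'a) * g) \<subseteq> monomials n"
    unfolding keys_monom_mult using keys_g m monomials_add by blast
  show "m + LM ord g \<in> Poly_Mapping.keys (Poly_Mapping.single m (1::'a) * g)"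
    unfolding keys_monom_mult using LM_g by blast
  show "\<forall>s\<in>Poly_Mapping.keys (Poly_Mapping.single m (1::'a) * g). s \<noteq> m + LM ord g \<longrightarrow> ord s (m + LM ord g)"
  proof (intro ballI impI)
    fix s assume "s \<in> Poly_Mapping.keys (Poly_Mapping.single m (1::'a) * g)" "s \<noteq> m + LM ord g"
    then obtain s' where s': "s' \<in> Poly_Mapping.keys g" "s = m + s'" "s' \<noteq> LM ord g"
      unfolding keys_monom_mult by blast
    then have "ord (s' + m) (LM ord g + m)"
      using admissible_add_right[OF adm _ _ m] keys_g LM_g by blast
    then show "ord s (m + LM ord g)" using s' by (simp add: add.commute)
  qed
qed

lemma finite_monom_multiples:
  assumes "finite G"
  shows "finite {Poly_Mapping.single m (1::'a::comm_ring_1) * g | m g. g \<in> G \<and> m \<in> monomials n \<and>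
            (\<forall>i<n. deg i m \<le> h i - deg i (LM ord g))}"
proof (rule finite_subset)
  show "{Poly_Mapping.single m (1::'a) * g | m g. g \<in> G \<and> m \<in> monomials n \<and>
            (\<forall>i<n. deg i m \<le> h i - deg i (LM ord g))}
        \<subseteq> (\<lambda>(m, g). Poly_Mapping.single m 1 * g) ` ({m \<in> monomials n. \<forall>i<n. deg i m \<le> h i} \<times> G)"
    by (force intro: order_trans[OF _ diff_le_self])
  show "finite ((\<lambda>(m, g). Poly_Mapping.single m (1::'a) * g) ` ({m \<in> monomials n. \<forall>i<n. deg i m \<le> h i} \<times> G))"
    using finite_bounded_monomials assms by blast
qed

lemma LM_monom_multiples:
  fixes G :: "'a::comm_ring_1 mpoly set"
  assumes adm: "admissible n ord" and G: "\<forall>g\<in>G. g \<in> polys n \<and> g \<noteq> 0"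
    and h: "\<forall>g\<in>G. \<forall>i. deg i (LM ord g) \<le> h i"
  shows "LM ord ` {Poly_Mapping.single m 1 * g | m g. g \<in> G \<and> m \<in> monomials n \<and>
            (\<forall>i<n. deg i m \<le> h i - deg i (LM ord g))}
       = {u \<in> monomials n. (\<forall>i<n. deg i u \<le> h i) \<and> (\<exists>g\<in>G. mdvd (LM ord g) u)}"
    (is "LM ord ` ?M = ?U")
proof
  show "LM ord ` ?M \<subseteq> ?U"
  proof
    fix u assume "u \<in> LM ord ` ?M"
    then obtain m g where g: "g \<in> G" and m: "m \<in> monomials n" "\<forall>i<n. deg i m \<le> h i - deg i (LM ord g)"
      and "u = LM ord (Poly_Mapping.single m 1 * g)" by blast
    then have u: "u = m + LM ord g" using LM_monom_mult[OF adm] G by blast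
    have "u \<in> monomials n" using u m(1) LM_in_monomials[OF adm] G g monomials_add by blast
    moreover have "deg i u \<le> h i" if "i < n" for i
    proof -
      have "deg i m + deg i (LM ord g) \<le> h i" using m(2) that h g by (simp add: le_diff_conv2)
      then show ?thesis by (simp add: u deg_def lookup_add)
    qed
    moreover have "mdvd (LM ord g) u" by (simp add: u mdvd_def lookup_add)
    ultimately show "u \<in> ?U" using g by blast
  qed
  show "?U \<subseteq> LM ord ` ?M"
  proof
    fix u assume "u \<in> ?U"
    then obtain g where u: "u \<in> monomials n" "\<forall>i<n. deg i u \<le> h i"
      and g: "g \<in> G" "mdvd (LM ord g) u" by blast
    define m where "m = u - LM ord g"
    have "u = m + LM ord g"
      using mdvd_imp_eq_add_diff[OF g(2)] by (simp add: m_def add.commute)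
    also have "\<dots> = LM ord (Poly_Mapping.single m 1 * g)"
      using LM_monom_mult[OF adm monomials_diff[OF u(1)]] G g(1) unfolding m_def by metis
    finally have "u = LM ord (Poly_Mapping.single m 1 * g)" .
    moreover have "\<forall>i<n. deg i m \<le> h i - deg i (LM ord g)"
      using u(2) by (simp add: m_def deg_def lookup_minus diff_le_mono)
    ultimately show "u \<in> LM ord ` ?M"
      using g(1) monomials_diff[OF u(1)] unfolding m_def by blast
  qed
qed

lemma monom_multiples_subset_ideal:
  assumes "is_ideal n I" "G \<subseteq> I"
  shows "{Poly_Mapping.single m 1 * g | m g. g \<in> G \<and> m \<in> monomials n \<and> P m g} \<subseteq> I"
proof
  fix p assume "p \<in> {Poly_Mapping.single m 1 * g | m g. g \<in> G \<and> m \<in> monomials n \<and> P m g}"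
  then obtain m g where p: "p = Poly_Mapping.single m 1 * g" "g \<in> G" "m \<in> monomials n" by blast
  then have "Poly_Mapping.single m 1 \<in> polys n" by (simp add: polys_def)
  then show "p \<in> I" using p assms unfolding is_ideal_def by blast
qed

theorem proposition1:
  fixes n :: nat
    and ord :: "mon \<Rightarrow> mon \<Rightarrow> bool"
    and sq :: "mon \<Rightarrow> mon \<Rightarrow> bool"
    and \<rho> :: "nat \<Rightarrow> nat"
    and I G :: "('a::field) mpoly set"
    and h :: "nat \<Rightarrow> nat"
  assumes "admissible n ord"
    and "bij_betw \<rho> {..<n} {..<n}"
    and "admissible n sq \<or> admissible n (\<lambda>u v. sq v u)"
    and "is_ideal n I"
    and "minimal_groebner_basis n ord G I"
    and "\<And>i. h i = Max ((\<lambda>g. deg i (LM ord g)) ` G)"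
  shows "L_involutive_basis n sq \<rho> ord
           {Poly_Mapping.single m 1 * g | m g. g \<in> G \<and> m \<in> monomials n \<and>
              (\<forall>i<n. deg i m \<le> h i - deg i (LM ord g))} I"
    (is "L_involutive_basis n sq \<rho> ord ?G' I")
proof -
  let ?U = "{u \<in> monomials n. (\<forall>i<n. deg i u \<le> h i) \<and> (\<exists>g\<in>G. mdvd (LM ord g) u)}"
  have G: "finite G" "G \<subseteq> I" "0 \<notin> G" "\<forall>f\<in>I. f \<noteq> 0 \<longrightarrow> (\<exists>g\<in>G. mdvd (LM ord g) (LM ord f))"
    using assms(5) unfolding minimal_groebner_basis_def groebner_basis_def by auto
  have I: "I \<subseteq> polys n" using assms(4) unfolding is_ideal_def by auto
  have "\<forall>g\<in>G. g \<in> polys n \<and> g \<noteq> 0" using G(2,3) I by auto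
  moreover have h: "\<forall>g\<in>G. \<forall>i. deg i (LM ord g) \<le> h i" using G(1) assms(6) by simp
  ultimately have U: "LM ord ` ?G' = ?U" by (rule LM_monom_multiples[OF assms(1)])
  have "?G' \<subseteq> I"
    using monom_multiples_subset_ideal[OF assms(4) G(2)] by blast
  moreover have "\<exists>g'\<in>?G'. L_divides n sq \<rho> (LM ord ` ?G') (LM ord g') (LM ord f)"
    if f: "f \<in> I" "f \<noteq> 0" for f
  proof -
    have w: "LM ord f \<in> monomials n" using LM_in_monomials[OF assms(1)] I f by blast
    obtain g where "g \<in> G" "mdvd (LM ord g) (LM ord f)" using G(4) f by blast
    then have "mdvd (LM ord g) (truncate h (LM ord f))" using h mdvd_truncate by blast
    then have u: "truncate h (LM ord f) \<in> ?U"
      using w \<open>g \<in> G\<close> by (auto simp: monomials_iff deg_def lookup_truncate)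
    then have "truncate h (LM ord f) \<in> LM ord ` ?G'" by (simp only: U)
    then obtain g' where g': "truncate h (LM ord f) = LM ord g'" "g' \<in> ?G'" by (rule imageE)
    have "L_divides n sq \<rho> ?U (truncate h (LM ord f)) (LM ord f)"
      by (rule L_divides_truncate[OF assms(3,2) w _ u]) auto
    then show ?thesis
      unfolding U by (intro bexI[OF _ g'(2)]) (simp only: g'(1))
  qed
  ultimately show ?thesis
    unfolding L_involutive_basis_def by (intro conjI finite_monom_multiples[OF G(1)] ballI impI)
qed

end
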